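(* In an operational probabilistic theory, let $\mathrm{A},\mathrm{B}$ be systems with $\mathsf{Transf}_{\mathbb{R}}(\mathrm{A}\to\mathrm{B})$ finite-dimensional. Then there exist an integer $N\ge1$, systems $\mathrm{E}_1,\dots,\mathrm{E}_N$ and states $\rho_i\in\mathsf{St}(\mathrm{A}\otimes\mathrm{E}_i)$, $i=1,\dots,N$, such that $(\rho_1,\dots,\rho_N)$ is tomographically faithful for $\mathsf{Transf}(\mathrm{A}\to\mathrm{B})$.
   Context: Operational probabilistic theory: systems closed under $\otimes$; sets $\mathsf{Transf}(\mathrm{A}\to\mathrm{B})$ closed under $\circ$ and $\otimes$; states $\mathsf{St}(\mathrm{A})$ spanning a real vector space $\mathsf{St}_{\mathbb{R}}(\mathrm{A})$; transformations identified when they give equal probabilities in all circuits. A transformation $\mathcal{T}$ is identified with the family of linear maps $\widehat{\mathcal{T}\otimes\mathcal{I}_{\mathrm{E}}}:\mathsf{St}_{\mathbb{R}}(\mathrm{A}\otimes\mathrm{E})\to\mathsf{St}_{\mathbb{R}}(\mathrm{B}\otimes\mathrm{E})$ over all systems $\mathrm{E}$, and $\mathsf{Transf}_{\mathbb{R}}(\mathrm{A}\to\mathrm{B})$ is the real vector space spanned by transformations in this representation (no local tomography is assumed). A tuple $(\rho_1,\dots,\rho_N)$ with $\rho_i\in\mathsf{St}(\mathrm{A}\otimes\mathrm{E}_i)$ is tomographically faithful for $\mathsf{Transf}(\mathrm{A}\to\mathrm{B})$ if for all $\mathcal{T},\mathcal{T}'\in\mathsf{Transf}(\mathrm{A}\to\mathrm{B})$,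 $(\mathcal{T}'\otimes\mathcal{I}_{\mathrm{E}_i})(\rho_i)=(\mathcal{T}\otimes\mathcal{I}_{\mathrm{E}_i})(\rho_i)$ for all $i$ implies $\mathcal{T}'=\mathcal{T}$. *)

theory Defs
  imports "HOL-Analysis.Analysis" "HOL-Library.Function_Algebras"
begin

text \<open>
Abstract rendering of an operational probabilistic theory (OPT), restricted to the
data used in the statement.
  \<^item> 's is the type of systems, tens A B is the composite system A \<otimes> B;
  \<^item> all state sets live in an ambient real vector space 'v; St A is the set of
    states of A and St_R(A) = span (St A);
  \<^item> a transformation T : A \<rightarrow> B is identified with its family of linear maps
    E \<mapsto> (T \<otimes> I_E)^ : St_R(A\<otimes>E) \<rightarrow> St_R(B\<otimes>E); we represent it as
    a function T :: 's \<Rightarrow> 'v \<Rightarrow> 'v with T E x = (T \<otimes> I_E)(x) for x in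
    St_R(A \<otimes> E), normalised to 0 outside St_R(A\<otimes>E), so that equality of
    transformations is equality of these families;
  \<^item> Transf A B is the set of transformations from A to B (in this representation).
\<close>

type_synonym ('s, 'v) tfam = "'s \<Rightarrow> 'v \<Rightarrow> 'v"

definition opt_rep ::
  "('s \<Rightarrow> 's \<Rightarrow> 's) \<Rightarrow> ('s \<Rightarrow> 'v::real_vector set) \<Rightarrow> ('s \<Rightarrow> 's \<Rightarrow> ('s, 'v) tfam set) \<Rightarrow> bool"
where
  "opt_rep tens St Transf \<longleftrightarrow>
     (\<forall>A. St A \<noteq> {}) \<and>
     (\<forall>A B T E. T \<in> Transf A B \<longrightarrow>
        (\<forall>x\<in>span (St (tens A E)). \<forall>y\<in>span (St (tens A E)). \<forall>c.
            T E (x + y) = T E x + T E y \<and> T E (c *\<^sub>R x) = c *\<^sub>R T E x) \<and>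
        (\<forall>x\<in>span (St (tens A E)). T E x \<in> span (St (tens B E))) \<and>
        (\<forall>x. x \<notin> span (St (tens A E)) \<longrightarrow> T E x = 0))"

text \<open>Scalar multiplication on families (pointwise); with pointwise addition from
Function_Algebras this makes families a real vector space.\<close>
definition fscale :: "real \<Rightarrow> ('s, 'v::real_vector) tfam \<Rightarrow> ('s, 'v) tfam" where
  "fscale c F = (\<lambda>E x. c *\<^sub>R F E x)"

definition TransfR ::
  "('s \<Rightarrow> 's \<Rightarrow> ('s, 'v::real_vector) tfam set) \<Rightarrow> 's \<Rightarrow> 's \<Rightarrow> ('s, 'v) tfam set" where
  "TransfR Transf A B = module.span fscale (Transf A B)"

definition fin_dim_fam :: "('s, 'v::real_vector) tfam set \<Rightarrow> bool" where
  "fin_dim_fam V \<longleftrightarrow> (\<exists>S. finite S \<and> S \<subseteq> V \<and> module.span fscale S = V)"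

definition tomo_faithful ::
  "('s \<Rightarrow> 's \<Rightarrow> 's) \<Rightarrow> ('s \<Rightarrow> 's \<Rightarrow> ('s, 'v) tfam set) \<Rightarrow> 's \<Rightarrow> 's
    \<Rightarrow> nat \<Rightarrow> (nat \<Rightarrow> 's) \<Rightarrow> (nat \<Rightarrow> 'v) \<Rightarrow> bool" where
  "tomo_faithful tens Transf A B N E \<rho> \<longleftrightarrow>
     (\<forall>T\<in>Transf A B. \<forall>T'\<in>Transf A B.
        (\<forall>i\<in>{1..N}. T' (E i) (\<rho> i) = T (E i) (\<rho> i)) \<longrightarrow> T' = T)"

end

theory Submission
  imports Defs
begin

text \<open>
Transf_R(A \<rightarrow> B) consists of families that are linear on each St_R(A \<otimes> E) and
vanish outside it, so a nonzero element is nonzero on some state \<rho> \<in> St(A \<otimes> E).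
Evaluation at a state is linear, and a finite-dimensional space of functions is
separated by finitely many points: adjoining generators one at a time, each new
generator enlarges the subspace vanishing on the points chosen so far by at most
one dimension, and one more point kills that line. The finitely many states so
obtained, listed as \<rho>_1, ..., \<rho>_N, are tomographically faithful because T' - T
lies in Transf_R(A \<rightarrow> B).
\<close>

lemma vector_space_fscale: "vector_space (fscale :: real \<Rightarrow> ('s, 'v::real_vector) tfam \<Rightarrow> _)"
  by unfold_locales (auto simp: fscale_def fun_eq_iff scaleR_add_right scaleR_add_left)

lemma module_fscale: "module (fscale :: real \<Rightarrow> ('s, 'v::real_vector) tfam \<Rightarrow> _)"
  using vector_space_fscale by (simp add: vector_space_def module_def)

definition linear_fams ::
  "('s \<Rightarrow> 's \<Rightarrow> 's) \<Rightarrow> ('s \<Rightarrow> 'v::real_vector set) \<Rightarrow> 's \<Rightarrow> ('s, 'v) tfam set" where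
  "linear_fams tens St A = {F. \<forall>E.
     (\<forall>x\<in>span (St (tens A E)). \<forall>y\<in>span (St (tens A E)). \<forall>c.
        F E (x + y) = F E x + F E y \<and> F E (c *\<^sub>R x) = c *\<^sub>R F E x) \<and>
     (\<forall>x. x \<notin> span (St (tens A E)) \<longrightarrow> F E x = 0)}"

lemma subspace_linear_fams: "module.subspace fscale (linear_fams tens St A)"
  unfolding module.subspace_def[OF module_fscale]
  by (auto simp: linear_fams_def fscale_def algebra_simps)

lemma TransfR_subset_linear_fams:
  assumes "opt_rep tens St Transf"
  shows "TransfR Transf A B \<subseteq> linear_fams tens St A"
  unfolding TransfR_def
proof (rule module.span_minimal[OF module_fscale _ subspace_linear_fams])
  show "Transf A B \<subseteq> linear_fams tens St A"
    using assms by (auto simp: opt_rep_def linear_fams_def)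
qed

lemma linear_fams_nonzero_on_some_state:
  assumes F: "F \<in> linear_fams tens St A" and "F \<noteq> 0"
  obtains E x where "x \<in> St (tens A E)" "F E x \<noteq> 0"
proof (rule ccontr)
  assume "\<not> thesis"
  with that have vanish: "\<And>E x. x \<in> St (tens A E) \<Longrightarrow> F E x = 0"
    by blast
  have "F E x = 0" for E x
  proof -
    let ?V = "span (St (tens A E))"
    have add: "\<And>x y. x \<in> ?V \<Longrightarrow> y \<in> ?V \<Longrightarrow> F E (x + y) = F E x + F E y"
      and scale: "\<And>x c. x \<in> ?V \<Longrightarrow> F E (c *\<^sub>R x) = c *\<^sub>R F E x"
      and outside: "x \<notin> ?V \<Longrightarrow> F E x = 0"
      using F by (auto simp: linear_fams_def)
    have "F E 0 = 0"
      using scale[OF span_zero, of 0] by simp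
    then have "subspace {x \<in> ?V. F E x = 0}"
      by (auto simp: subspace_def add scale span_zero span_add span_scale)
    then have "?V \<subseteq> {x \<in> ?V. F E x = 0}"
      by (intro span_minimal) (auto simp: vanish span_base)
    with outside show "F E x = 0"
      by auto
  qed
  with \<open>F \<noteq> 0\<close> show False
    by (auto simp: fun_eq_iff)
qed

lemma TransfR_nonzero_on_some_state:
  assumes "opt_rep tens St Transf" "F \<in> TransfR Transf A B" "F \<noteq> 0"
  shows "\<exists>E. \<exists>x\<in>St (tens A E). F E x \<noteq> 0"
proof -
  have "F \<in> linear_fams tens St A"
    using subsetD[OF TransfR_subset_linear_fams[OF assms(1)] assms(2)] .
  then obtain E x where "x \<in> St (tens A E)" "F E x \<noteq> 0"
    using assms(3) by (rule linear_fams_nonzero_on_some_state)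
  then show ?thesis
    by blast
qed

definition vanishes_on :: "('s \<times> 'v) set \<Rightarrow> ('s, 'v::real_vector) tfam \<Rightarrow> bool" where
  "vanishes_on P F \<longleftrightarrow> (\<forall>E x. (E, x) \<in> P \<longrightarrow> F E x = 0)"

lemma vanishes_on_insert [simp]:
  "vanishes_on (insert (E, x) P) F \<longleftrightarrow> F E x = 0 \<and> vanishes_on P F"
  by (auto simp: vanishes_on_def)

lemma vanishes_on_diff_scale:
  "vanishes_on P F \<Longrightarrow> vanishes_on P G \<Longrightarrow> vanishes_on P (F - fscale c G)"
  by (auto simp: vanishes_on_def fscale_def)

lemma separating_points_insert:
  assumes sep: "\<forall>F\<in>module.span fscale S. vanishes_on P F \<longrightarrow> F = 0"
    and w: "w \<in> module.span fscale (insert s S)" "vanishes_on P w" "w E x \<noteq> 0"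
  shows "\<forall>F\<in>module.span fscale (insert s S). vanishes_on (insert (E, x) P) F \<longrightarrow> F = 0"
proof (intro ballI impI)
  fix F
  assume F: "F \<in> module.span fscale (insert s S)" "vanishes_on (insert (E, x) P) F"
  have "w \<notin> module.span fscale S"
  proof
    assume "w \<in> module.span fscale S"
    with sep w(2) have "w = 0"
      by blast
    with w(3) show False
      by simp
  qed
  with w(1) have "s \<in> module.span fscale (insert w S)"
    by (rule vector_space.in_span_insert[OF vector_space_fscale])
  moreover have "F \<in> module.span fscale (insert s (insert w S))"
    using F(1) module.span_mono[OF module_fscale, of "insert s S" "insert s (insert w S)"] by auto
  ultimately have "F \<in> module.span fscale (insert w S)"
    by (rule vector_space.span_trans[OF vector_space_fscale])
  then obtain c where c: "F - fscale c w \<in> module.span fscale S"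
    by (auto simp: module.span_breakdown_eq[OF module_fscale])
  moreover have "vanishes_on P (F - fscale c w)"
    using F(2) w(2) by (simp add: vanishes_on_diff_scale)
  ultimately have "F - fscale c w = 0"
    using sep by blast
  then have F_eq: "F = fscale c w"
    by simp
  then have "c *\<^sub>R w E x = 0"
    using F(2) by (simp add: fscale_def)
  with w(3) show "F = 0"
    by (simp add: F_eq fscale_def fun_eq_iff)
qed

lemma finite_separating_points:
  assumes "finite S"
    and "\<And>F. F \<in> module.span fscale S \<Longrightarrow> F \<noteq> 0 \<Longrightarrow> \<exists>(E, x)\<in>Q. F E x \<noteq> 0"
  shows "\<exists>P\<subseteq>Q. finite P \<and> (\<forall>F\<in>module.span fscale S. vanishes_on P F \<longrightarrow> F = 0)"
  using assms
proof (induction S rule: finite_induct)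
  case empty
  show ?case
    by (auto simp: module.span_empty[OF module_fscale])
next
  case (insert s S)
  have "\<exists>(E, x)\<in>Q. F E x \<noteq> 0" if "F \<in> module.span fscale S" "F \<noteq> 0" for F
    using insert.prems module.span_mono[OF module_fscale, of S "insert s S"] that by blast
  with insert.IH obtain P where P: "P \<subseteq> Q" "finite P"
    and sep: "\<forall>F\<in>module.span fscale S. vanishes_on P F \<longrightarrow> F = 0"
    by blast
  show ?case
  proof (cases "\<forall>F\<in>module.span fscale (insert s S). vanishes_on P F \<longrightarrow> F = 0")
    case True
    with P show ?thesis
      by blast
  next
    case False
    then obtain w where w: "w \<in> module.span fscale (insert s S)" "vanishes_on P w" "w \<noteq> 0"
      by blast
    with insert.prems obtain E x where "(E, x) \<in> Q" "w E x \<noteq> 0"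
      by blast
    with P have "insert (E, x) P \<subseteq> Q" "finite (insert (E, x) P)"
      by auto
    moreover have "\<forall>F\<in>module.span fscale (insert s S). vanishes_on (insert (E, x) P) F \<longrightarrow> F = 0"
      using separating_points_insert[OF sep w(1,2) \<open>w E x \<noteq> 0\<close>] .
    ultimately show ?thesis
      by blast
  qed
qed

lemma tomo_faithful_if_separating_points:
  assumes sep: "\<forall>F\<in>TransfR Transf A B. vanishes_on P F \<longrightarrow> F = 0"
    and P: "P \<subseteq> (\<lambda>i. (E i, \<rho> i)) ` {1..N}"
  shows "tomo_faithful tens Transf A B N E \<rho>"
  unfolding tomo_faithful_def
proof (intro ballI impI)
  fix T T'
  assume "T \<in> Transf A B" "T' \<in> Transf A B"
    and eq: "\<forall>i\<in>{1..N}. T' (E i) (\<rho> i) = T (E i) (\<rho> i)"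
  then have "T' - T \<in> TransfR Transf A B"
    by (simp add: TransfR_def module.span_diff[OF module_fscale] module.span_base[OF module_fscale])
  moreover have "vanishes_on P (T' - T)"
    unfolding vanishes_on_def using P eq by fastforce
  ultimately have "T' - T = 0"
    using sep by blast
  then show "T' = T"
    by simp
qed

lemma enumerate_finite_subset:
  fixes P :: "('a \<times> 'b) set"
  assumes "finite P" "P \<subseteq> Q" "Q \<noteq> {}"
  obtains N :: nat and E \<rho>
  where "N \<ge> 1" "P \<subseteq> (\<lambda>i. (E i, \<rho> i)) ` {1..N}" "(\<lambda>i. (E i, \<rho> i)) ` {1..N} \<subseteq> Q"
proof -
  obtain q where "q \<in> Q"
    using assms(3) by blast
  define P' where "P' = insert q P"
  have P': "finite P'" "P \<subseteq> P'" "P' \<subseteq> Q" "card P' \<ge> 1"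
    using assms \<open>q \<in> Q\<close> by (auto simp: P'_def Suc_le_eq card_gt_0_iff)
  then obtain h where "bij_betw h {1..card P'} P'"
    using ex_bij_betw_nat_finite_1 by blast
  then have "P' = (\<lambda>i. (fst (h i), snd (h i))) ` {1..card P'}"
    by (simp add: bij_betw_def)
  with P' show thesis
    using that[of "card P'" "\<lambda>i. fst (h i)" "\<lambda>i. snd (h i)"] by simp
qed

theorem mainTheorem8:
  fixes tens :: "'s \<Rightarrow> 's \<Rightarrow> 's"
    and St :: "'s \<Rightarrow> 'v::real_vector set"
    and Transf :: "'s \<Rightarrow> 's \<Rightarrow> ('s, 'v) tfam set"
    and A B :: 's
  assumes "opt_rep tens St Transf"
    and "fin_dim_fam (TransfR Transf A B)"
  shows "\<exists>N::nat. N \<ge> 1 \<and> (\<exists>E::nat \<Rightarrow> 's. \<exists>\<rho>::nat \<Rightarrow> 'v.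
           (\<forall>i\<in>{1..N}. \<rho> i \<in> St (tens A (E i))) \<and>
           tomo_faithful tens Transf A B N E \<rho>)"
proof -
  define Q where "Q = {(E, x). x \<in> St (tens A E)}"
  obtain S where S: "finite S" "module.span fscale S = TransfR Transf A B"
    using assms(2) by (auto simp: fin_dim_fam_def)
  have "\<exists>(E, x)\<in>Q. F E x \<noteq> 0" if "F \<in> TransfR Transf A B" "F \<noteq> 0" for F
    using TransfR_nonzero_on_some_state[OF assms(1) that] by (auto simp: Q_def)
  then have "\<exists>P\<subseteq>Q. finite P \<and> (\<forall>F\<in>TransfR Transf A B. vanishes_on P F \<longrightarrow> F = 0)"
    by (rule finite_separating_points[OF S(1), unfolded S(2)])
  then obtain P where P: "finite P" "P \<subseteq> Q"
    and sep: "\<forall>F\<in>TransfR Transf A B. vanishes_on P F \<longrightarrow> F = 0"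
    by blast
  have "St (tens A A) \<noteq> {}"
    using assms(1) by (simp add: opt_rep_def)
  then have "Q \<noteq> {}"
    by (auto simp: Q_def)
  with P obtain N :: nat and E \<rho> where "N \<ge> 1"
    and covers: "P \<subseteq> (\<lambda>i. (E i, \<rho> i)) ` {1..N}"
    and states: "(\<lambda>i. (E i, \<rho> i)) ` {1..N} \<subseteq> Q"
    by (rule enumerate_finite_subset)
  moreover have "\<forall>i\<in>{1..N}. \<rho> i \<in> St (tens A (E i))"
    using states by (auto simp: Q_def)
  moreover have "tomo_faithful tens Transf A B N E \<rho>"
    using sep covers by (rule tomo_faithful_if_separating_points)
  ultimately show ?thesis
    by blast
qed

end
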